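(* In the setting of the context: (i) if $A$ is any frontier, then $\sum_{\mathbf{w}\in A}\Pr_{\theta,\phi}(\mathbf{w}\mid\mathbf{z}_{\mathrm{pre}})=1$. (ii) Run top-$k$ constrained beam search ($k$-CBS) with beam width $B$; let $F$ be the set of continuations $\mathbf{x}$ of the output pairs $(\mathbf{z}_{\mathrm{pre}}\Vert\mathbf{x},\ell)\in C_T$, and let $R_{\mathrm{prune}}$ be the set of partial continuations $\mathbf{u}$ (of lengths $t<T$) such that a pair $(\mathbf{z}_{\mathrm{pre}}\Vert\mathbf{u},\ell)$ was in $C_t$ but was removed at step $t$ (either because its history ends in EOS or because it was not among the $B$ retained pairs). Then $F\cup R_{\mathrm{prune}}$ is a frontier, and $$\sum_{\mathbf{x}\in F}\Pr_{\theta,\phi}(\mathbf{x}\mid\mathbf{z}_{\mathrm{pre}})+\sum_{\mathbf{u}\in R_{\mathrm{prune}}}\Pr_{\theta,\phi}(\mathbf{u}\mid\mathbf{z}_{\mathrm{pre}})=1.$$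
   Context: Let $\mathbb{V}$ be a finite vocabulary containing a designated end-of-sequence token EOS. A language model $\theta$ assigns to every finite token sequence (history) $\mathbf{h}$ a probability distribution $\Pr_\theta(\cdot\mid\mathbf{h})$ on $\mathbb{V}$ with $\Pr_\theta(v\mid\mathbf{h})>0$ for all $v$. For an integer $k\ge1$ and a history $\mathbf{h}$, let $S(\mathbf{h})\subseteq\mathbb{V}$ be the set of $k$ tokens with the largest values of $\Pr_\theta(\cdot\mid\mathbf{h})$ (ties broken by a fixed deterministic rule). The top-$k$ decoding distribution is $\Pr_{\theta,\phi}(v\mid\mathbf{h})=\Pr_\theta(v\mid\mathbf{h})/\sum_{u\in S(\mathbf{h})}\Pr_\theta(u\mid\mathbf{h})$ for $v\in S(\mathbf{h})$ and $0$ otherwise. Fix a prefix $\mathbf{z}_{\mathrm{pre}}$ and $T\ge1$. For a partial continuation $\mathbf{u}=(u_1,\dots,u_t)$, $0\le t\le T$, $\Pr_{\theta,\phi}(\mathbf{u}\mid\mathbf{z}_{\mathrm{pre}})=\prod_{s=1}^t\Pr_{\theta,\phi}(u_s\mid\mathbf{z}_{\mathrm{pre}}\Vert u_{1:s-1})$ ($\Vert$ is concatenation). Call $\mathbf{u}$ a node of the top-$k$ tree if $u_s\in S(\mathbf{z}_{\mathrm{pre}}\Vert u_{1:s-1})$ for all $s\le t$. A frontier is a set $A$ of nodes (of lengths at most $T$) such that no element of $A$ is a proper initial segment of another element of $A$, and every node of length $T$ has exactly one element of $A$ as an initial segment. $k$-CBS with beam width $B$: set $L_0=\{(\mathbf{z}_{\mathrm{pre}},0)\}$.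 For $t=1,\dots,T$: let $C_t=\{(\mathbf{h}\Vert v,\ \ell+\log\Pr_{\theta,\phi}(v\mid\mathbf{h})):(\mathbf{h},\ell)\in L_{t-1},\ v\in S(\mathbf{h})\}$. If $t=T$, output $C_T$. If $t<T$, delete from $C_t$ every pair whose history ends in EOS, and let $L_t$ be the (at most) $B$ pairs of $C_t$ with the largest second coordinate (deterministic tie-breaking). *)

theory Defs
  imports Complex_Main "HOL-Library.Sublist"
begin

text \<open>Language model: P h v is Pr_theta(v | h). S h is the top-k set at history h.\<close>

definition valid_lm :: "('v::finite list \<Rightarrow> 'v \<Rightarrow> real) \<Rightarrow> bool" where
  "valid_lm P \<longleftrightarrow> (\<forall>h v. P h v > 0) \<and> (\<forall>h. (\<Sum>v\<in>UNIV. P h v) = 1)"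

definition topk_sets :: "nat \<Rightarrow> ('v::finite list \<Rightarrow> 'v \<Rightarrow> real) \<Rightarrow> ('v list \<Rightarrow> 'v set) \<Rightarrow> bool" where
  "topk_sets k P S \<longleftrightarrow> (\<forall>h. card (S h) = k \<and>
      (\<forall>u\<in>S h. \<forall>v. v \<notin> S h \<longrightarrow> P h v \<le> P h u))"

definition topk_prob :: "('v list \<Rightarrow> 'v \<Rightarrow> real) \<Rightarrow> ('v list \<Rightarrow> 'v set) \<Rightarrow> 'v list \<Rightarrow> 'v \<Rightarrow> real" where
  "topk_prob P S h v = (if v \<in> S h then P h v / (\<Sum>u\<in>S h. P h u) else 0)"

definition seq_prob :: "('v list \<Rightarrow> 'v \<Rightarrow> real) \<Rightarrow> ('v list \<Rightarrow> 'v set) \<Rightarrow> 'v list \<Rightarrow> 'v list \<Rightarrow> real" where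
  "seq_prob P S zpre u = (\<Prod>s<length u. topk_prob P S (zpre @ take s u) (u ! s))"

definition is_node :: "('v list \<Rightarrow> 'v set) \<Rightarrow> 'v list \<Rightarrow> 'v list \<Rightarrow> bool" where
  "is_node S zpre u \<longleftrightarrow> (\<forall>s<length u. u ! s \<in> S (zpre @ take s u))"

definition frontier :: "('v list \<Rightarrow> 'v set) \<Rightarrow> 'v list \<Rightarrow> nat \<Rightarrow> 'v list set \<Rightarrow> bool" where
  "frontier S zpre T A \<longleftrightarrow>
     (\<forall>a\<in>A. is_node S zpre a \<and> length a \<le> T) \<and>
     (\<forall>a\<in>A. \<forall>b\<in>A. \<not> strict_prefix a b) \<and>
     (\<forall>w. is_node S zpre w \<and> length w = T \<longrightarrow> (\<exists>!a. a \<in> A \<and> prefix a w))"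

definition cbs_expand :: "('v list \<Rightarrow> 'v \<Rightarrow> real) \<Rightarrow> ('v list \<Rightarrow> 'v set) \<Rightarrow>
    ('v list \<times> real) set \<Rightarrow> ('v list \<times> real) set" where
  "cbs_expand P S L = {(h @ [v], l + ln (topk_prob P S h v)) | h l v. (h, l) \<in> L \<and> v \<in> S h}"

definition top_B :: "nat \<Rightarrow> ('a \<times> real) set \<Rightarrow> ('a \<times> real) set \<Rightarrow> bool" where
  "top_B B X Y \<longleftrightarrow> Y \<subseteq> X \<and> card Y = min B (card X) \<and>
     (\<forall>p\<in>Y. \<forall>q\<in>X - Y. snd q \<le> snd p)"

definition kcbs_run :: "('v list \<Rightarrow> 'v \<Rightarrow> real) \<Rightarrow> ('v list \<Rightarrow> 'v set) \<Rightarrow> 'v \<Rightarrow> nat \<Rightarrow> nat \<Rightarrow>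
    'v list \<Rightarrow> (nat \<Rightarrow> ('v list \<times> real) set) \<Rightarrow> (nat \<Rightarrow> ('v list \<times> real) set) \<Rightarrow> bool" where
  "kcbs_run P S EOS B T zpre L C \<longleftrightarrow>
     L 0 = {(zpre, 0)} \<and>
     (\<forall>t\<in>{1..T}. C t = cbs_expand P S (L (t - 1))) \<and>
     (\<forall>t\<in>{1..<T}. top_B B {p \<in> C t. last (fst p) \<noteq> EOS} (L t))"

end

theory Submission
  imports Defs
begin

(* Part (i): every conditional distribution of top-k decoding sums to one, so the probability
   of a node is the total probability of its extensions of length T. A frontier partitions the
   nodes of length T (all other sequences of length T have probability 0), hence its
   probabilities add up to the total mass at depth T, which is 1.

   Part (ii): every beam entry carries the score of its own continuation, so the continuations
   kept in the beams form a prefix-closed set of nodes of length < T containing the root. The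
   output and pruned continuations are exactly the children of kept continuations that are not
   kept themselves, and this boundary of a prefix-closed set is a frontier: a node of length T
   is cut just below its longest kept prefix, and no boundary element lies strictly below
   another because all proper prefixes of a boundary element are kept. *)

lemma seq_prob_snoc:
  "seq_prob P S zpre (x @ [v]) = seq_prob P S zpre x * topk_prob P S (zpre @ x) v"
proof -
  have "(\<Prod>s<length x. topk_prob P S (zpre @ take s (x @ [v])) ((x @ [v]) ! s))
      = (\<Prod>s<length x. topk_prob P S (zpre @ take s x) (x ! s))"
    by (rule prod.cong) (auto simp: nth_append)
  then show ?thesis
    unfolding seq_prob_def by simp
qed

lemma seq_prob_Nil [simp]: "seq_prob P S zpre [] = 1"
  by (simp add: seq_prob_def)

lemma is_node_snoc: "is_node S zpre (x @ [v]) \<longleftrightarrow> is_node S zpre x \<and> v \<in> S (zpre @ x)"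
  unfolding is_node_def by (auto simp: nth_append less_Suc_eq)

lemma seq_prob_eq_0_if_not_node: "\<not> is_node S zpre x \<Longrightarrow> seq_prob P S zpre x = 0"
  unfolding is_node_def seq_prob_def by (auto intro!: prod_zero simp: topk_prob_def)

lemma sum_topk_prob_eq_1:
  fixes P :: "'v::finite list \<Rightarrow> 'v \<Rightarrow> real"
  assumes "valid_lm P" and "S h \<noteq> {}"
  shows "(\<Sum>v\<in>UNIV. topk_prob P S h v) = 1"
proof -
  have "(\<Sum>u\<in>S h. P h u) > 0"
    using assms by (intro sum_pos) (auto simp: valid_lm_def)
  moreover have "(\<Sum>v\<in>UNIV. topk_prob P S h v) = (\<Sum>v\<in>S h. P h v / (\<Sum>u\<in>S h. P h u))"
    unfolding topk_prob_def by (simp add: sum.If_cases)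
  ultimately show ?thesis
    by (simp add: sum_divide_distrib[symmetric])
qed

lemma finite_frontier:
  fixes A :: "'v::finite list set"
  assumes "frontier S zpre T A"
  shows "finite A"
  using assms unfolding frontier_def
  by (intro finite_subset[OF _ finite_lists_length_le[of "UNIV :: 'v set" T]]) auto

lemma frontier_split_length:
  "frontier S zpre T A \<Longrightarrow> {x \<in> A. length x = T} \<union> {x \<in> A. length x < T} = A"
  unfolding frontier_def by force

lemma sum_frontier_split_length:
  fixes A :: "'v::finite list set"
  assumes "frontier S zpre T A"
  shows "(\<Sum>x | x \<in> A \<and> length x = T. f x) + (\<Sum>x | x \<in> A \<and> length x < T. f x)
    = (\<Sum>x\<in>A. f x)"
proof -
  have "(\<Sum>x\<in>A. f x) = (\<Sum>x\<in>{x \<in> A. length x = T} \<union> {x \<in> A. length x < T}. f x)"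
    using frontier_split_length[OF assms] by simp
  also have "\<dots> = (\<Sum>x | x \<in> A \<and> length x = T. f x) + (\<Sum>x | x \<in> A \<and> length x < T. f x)"
    using finite_frontier[OF assms] by (intro sum.union_disjoint) auto
  finally show ?thesis ..
qed

context
  fixes P :: "'v::finite list \<Rightarrow> 'v \<Rightarrow> real" and S :: "'v list \<Rightarrow> 'v set"
  assumes topk_prob_normalized: "\<And>h. (\<Sum>v\<in>UNIV. topk_prob P S h v) = 1"
begin

lemma sum_seq_prob_append_length:
  "(\<Sum>w | length w = n. seq_prob P S zpre (a @ w)) = seq_prob P S zpre a"
proof (induction n arbitrary: a)
  case 0
  then show ?case by simp
next
  case (Suc n)
  have lists_Suc: "{w. length w = Suc n} = (\<lambda>(w, v). v # w) ` ({w. length w = n} \<times> UNIV)"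
    using lists_length_Suc_eq[of UNIV n] by auto
  have "(\<Sum>w | length w = Suc n. seq_prob P S zpre (a @ w))
      = (\<Sum>(w, v) \<in> {w. length w = n} \<times> UNIV. seq_prob P S zpre ((a @ [v]) @ w))"
    unfolding lists_Suc by (subst sum.reindex) (auto simp: inj_split_Cons intro!: sum.cong)
  also have "\<dots> = (\<Sum>v\<in>UNIV. \<Sum>w | length w = n. seq_prob P S zpre ((a @ [v]) @ w))"
    by (subst sum.cartesian_product[symmetric]) (rule sum.swap)
  also have "\<dots> = (\<Sum>v\<in>UNIV. seq_prob P S zpre a * topk_prob P S (zpre @ a) v)"
    by (rule sum.cong[OF refl]) (simp only: Suc.IH seq_prob_snoc)
  also have "\<dots> = seq_prob P S zpre a"
    by (simp add: sum_distrib_left[symmetric] topk_prob_normalized)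
  finally show ?case .
qed

lemma sum_seq_prob_extensions:
  assumes "length a \<le> n"
  shows "(\<Sum>x | length x = n \<and> prefix a x. seq_prob P S zpre x) = seq_prob P S zpre a"
proof -
  have "{x. length x = n \<and> prefix a x} = (@) a ` {w. length w = n - length a}"
    using assms by (auto simp: prefix_def)
  then show ?thesis
    by (simp add: sum.reindex inj_on_def sum_seq_prob_append_length)
qed

lemma frontier_sum_seq_prob:
  assumes A: "frontier S zpre T A"
  shows "(\<Sum>w\<in>A. seq_prob P S zpre w) = 1"
proof -
  define E where "E a = {x. length x = T \<and> prefix a x}" for a :: "'v list"
  have A_nodes: "\<And>a. a \<in> A \<Longrightarrow> length a \<le> T"
    and A_antichain: "\<And>a b. a \<in> A \<Longrightarrow> b \<in> A \<Longrightarrow> \<not> strict_prefix a b"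
    and A_covers: "\<And>w. is_node S zpre w \<Longrightarrow> length w = T \<Longrightarrow> \<exists>a\<in>A. prefix a w"
    using A unfolding frontier_def by blast+
  have fin: "finite {x :: 'v list. length x = T}"
    using finite_lists_length_eq[of "UNIV :: 'v set" T] by simp
  have "(\<Sum>w\<in>A. seq_prob P S zpre w) = (\<Sum>a\<in>A. \<Sum>x\<in>E a. seq_prob P S zpre x)"
    using A_nodes sum_seq_prob_extensions unfolding E_def by simp
  also have "\<dots> = (\<Sum>x\<in>(\<Union>a\<in>A. E a). seq_prob P S zpre x)"
  proof (intro sum.UNION_disjoint[symmetric] ballI impI)
    show "finite A"
      using A by (rule finite_frontier)
    show "finite (E a)" for a
      unfolding E_def by (rule finite_subset[OF _ fin]) auto
    show "E a \<inter> E b = {}" if "a \<in> A" "b \<in> A" "a \<noteq> b" for a b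
      using that A_antichain prefix_same_cases unfolding E_def by fastforce
  qed
  also have "\<dots> = (\<Sum>x | length x = T. seq_prob P S zpre x)"
  proof (rule sum.mono_neutral_left[OF fin])
    show "\<forall>x\<in>{x. length x = T} - (\<Union>a\<in>A. E a). seq_prob P S zpre x = 0"
      using A_covers by (auto simp: E_def intro: seq_prob_eq_0_if_not_node)
  qed (auto simp: E_def)
  also have "\<dots> = 1"
    using sum_seq_prob_extensions[of "[]" T] by simp
  finally show ?thesis .
qed

end

definition tree_boundary ::
    "('v list \<Rightarrow> 'v set) \<Rightarrow> 'v list \<Rightarrow> 'v list set \<Rightarrow> 'v list set" where
  "tree_boundary S zpre A = {x @ [v] | x v. x \<in> A \<and> v \<in> S (zpre @ x) \<and> x @ [v] \<notin> A}"

lemma frontier_tree_boundary: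
  assumes root: "[] \<in> A"
    and A_nodes: "\<And>x. x \<in> A \<Longrightarrow> is_node S zpre x \<and> length x < T"
    and A_prefix_closed: "\<And>x s. x \<in> A \<Longrightarrow> take s x \<in> A"
  shows "frontier S zpre T (tree_boundary S zpre A)"
proof -
  have antichain: "\<not> strict_prefix a b"
    if a: "a \<in> tree_boundary S zpre A" and b: "b \<in> tree_boundary S zpre A" for a b
  proof
    assume ab: "strict_prefix a b"
    from b obtain y w where "b = y @ [w]" "y \<in> A"
      unfolding tree_boundary_def by blast
    with ab have "prefix a y"
      by (metis prefix_order.less_le prefix_snoc)
    then have "take (length a) y = a"
      by (auto simp: prefix_def)
    with \<open>y \<in> A\<close> have "a \<in> A"
      using A_prefix_closed by metis
    with a show False
      unfolding tree_boundary_def by blast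
  qed
  have covers: "\<exists>a\<in>tree_boundary S zpre A. prefix a w"
    if w: "is_node S zpre w" "length w = T" for w
  proof -
    have "take T w \<notin> A"
      using w A_nodes by auto
    then obtain s where s: "take s w \<notin> A" "\<And>r. r < s \<Longrightarrow> take r w \<in> A"
      using exists_least_iff[of "\<lambda>s. take s w \<notin> A"] by blast
    have "s \<le> T"
      using s(2) \<open>take T w \<notin> A\<close> by (meson not_le)
    moreover have "s \<noteq> 0"
      using s(1) root by (metis take0)
    ultimately have "take s w = take (s - 1) w @ [w ! (s - 1)]" "take (s - 1) w \<in> A"
      "w ! (s - 1) \<in> S (zpre @ take (s - 1) w)"
      using w s(2) take_Suc_conv_app_nth[of "s - 1" w] unfolding is_node_def by auto
    with s(1) have "take s w \<in> tree_boundary S zpre A"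
      unfolding tree_boundary_def by auto
    then show ?thesis
      using take_is_prefix by blast
  qed
  have "is_node S zpre a \<and> length a \<le> T" if "a \<in> tree_boundary S zpre A" for a
    using that A_nodes unfolding tree_boundary_def by (auto simp: is_node_snoc Suc_le_eq)
  moreover have "\<exists>!a. a \<in> tree_boundary S zpre A \<and> prefix a w"
    if "is_node S zpre w" "length w = T" for w
    using covers[OF that] antichain prefix_same_cases by (metis prefix_order.le_neq_trans)
  ultimately show ?thesis
    unfolding frontier_def using antichain by blast
qed

definition seq_score ::
    "('v list \<Rightarrow> 'v \<Rightarrow> real) \<Rightarrow> ('v list \<Rightarrow> 'v set) \<Rightarrow> 'v list \<Rightarrow> 'v list \<Rightarrow> real" where
  "seq_score P S zpre x = (\<Sum>s<length x. ln (topk_prob P S (zpre @ take s x) (x ! s)))"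

lemma seq_score_Nil [simp]: "seq_score P S zpre [] = 0"
  by (simp add: seq_score_def)

lemma seq_score_snoc:
  "seq_score P S zpre (x @ [v]) = seq_score P S zpre x + ln (topk_prob P S (zpre @ x) v)"
proof -
  have "(\<Sum>s<length x. ln (topk_prob P S (zpre @ take s (x @ [v])) ((x @ [v]) ! s)))
      = (\<Sum>s<length x. ln (topk_prob P S (zpre @ take s x) (x ! s)))"
    by (rule sum.cong) (auto simp: nth_append)
  then show ?thesis
    unfolding seq_score_def by simp
qed

lemma cbs_expand_snoc_iff:
  "(h @ [v], l + ln (topk_prob P S h v)) \<in> cbs_expand P S L \<longleftrightarrow> (h, l) \<in> L \<and> v \<in> S h"
  unfolding cbs_expand_def by auto

definition scored_nodes :: "('v list \<Rightarrow> 'v \<Rightarrow> real) \<Rightarrow> ('v list \<Rightarrow> 'v set) \<Rightarrow> 'v list \<Rightarrow> nat \<Rightarrow>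
    ('v list \<times> real) set" where
  "scored_nodes P S zpre n =
     {(zpre @ x, seq_score P S zpre x) | x. length x = n \<and> is_node S zpre x}"

lemma append_in_scored_nodes_iff:
  "(zpre @ x, l) \<in> scored_nodes P S zpre n \<longleftrightarrow>
     length x = n \<and> is_node S zpre x \<and> l = seq_score P S zpre x"
  unfolding scored_nodes_def by auto

lemma cbs_expand_scored_nodes:
  assumes "L \<subseteq> scored_nodes P S zpre n"
  shows "cbs_expand P S L \<subseteq> scored_nodes P S zpre (Suc n)"
proof
  fix p assume "p \<in> cbs_expand P S L"
  then obtain x v where "p = ((zpre @ x) @ [v], seq_score P S zpre x + ln (topk_prob P S (zpre @ x) v))"
    "length x = n" "is_node S zpre x" "v \<in> S (zpre @ x)"
    using assms unfolding cbs_expand_def scored_nodes_def by blast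
  then show "p \<in> scored_nodes P S zpre (Suc n)"
    unfolding scored_nodes_def by (force simp: seq_score_snoc is_node_snoc)
qed

definition kcbs_survivors :: "('v list \<Rightarrow> 'v \<Rightarrow> real) \<Rightarrow> ('v list \<Rightarrow> 'v set) \<Rightarrow> nat \<Rightarrow> 'v list \<Rightarrow>
    (nat \<Rightarrow> ('v list \<times> real) set) \<Rightarrow> 'v list set" where
  "kcbs_survivors P S T zpre L =
     {x. length x < T \<and> (zpre @ x, seq_score P S zpre x) \<in> L (length x)}"

context
  fixes P :: "'v list \<Rightarrow> 'v \<Rightarrow> real" and S :: "'v list \<Rightarrow> 'v set" and EOS :: 'v
    and B T :: nat and zpre :: "'v list" and L C :: "nat \<Rightarrow> ('v list \<times> real) set"
  assumes run: "kcbs_run P S EOS B T zpre L C"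
begin

lemma kcbs_C_Suc:
  assumes "t < T"
  shows "C (Suc t) = cbs_expand P S (L t)"
proof -
  have "\<forall>t\<in>{1..T}. C t = cbs_expand P S (L (t - 1))"
    using run unfolding kcbs_run_def by blast
  from this[rule_format, of "Suc t"] assms show ?thesis
    by simp
qed

lemma kcbs_L_subset_C:
  assumes "0 < t" "t < T"
  shows "L t \<subseteq> C t"
proof -
  have "\<forall>t\<in>{1..<T}. top_B B {p \<in> C t. last (fst p) \<noteq> EOS} (L t)"
    using run unfolding kcbs_run_def by blast
  from this[rule_format, of t] assms show ?thesis
    unfolding top_B_def by auto
qed

(* Since the score is a function of the continuation, a pruned pair (zpre @ u, l) never
   shares its history with a kept pair of a different score. *)
lemma kcbs_L_scored_nodes: "t < T \<Longrightarrow> L t \<subseteq> scored_nodes P S zpre t"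
proof (induction t)
  case 0
  then show ?case
    using run unfolding kcbs_run_def scored_nodes_def by (auto simp: is_node_def)
next
  case (Suc t)
  then have "L (Suc t) \<subseteq> cbs_expand P S (L t)"
    using kcbs_L_subset_C kcbs_C_Suc by (metis Suc_lessD zero_less_Suc)
  also have "\<dots> \<subseteq> scored_nodes P S zpre (Suc t)"
    using Suc by (simp add: cbs_expand_scored_nodes)
  finally show ?case .
qed

lemma kcbs_C_scored_nodes: "0 < t \<Longrightarrow> t \<le> T \<Longrightarrow> C t \<subseteq> scored_nodes P S zpre t"
  using kcbs_C_Suc kcbs_L_scored_nodes cbs_expand_scored_nodes
  by (metis Suc_le_lessD Suc_pred)

lemma kcbs_C_Suc_iff:
  assumes "t < T"
  shows "(zpre @ x @ [v], seq_score P S zpre (x @ [v])) \<in> C (Suc t) \<longleftrightarrow>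
    (zpre @ x, seq_score P S zpre x) \<in> L t \<and> v \<in> S (zpre @ x)"
  using cbs_expand_snoc_iff[of "zpre @ x" v "seq_score P S zpre x"] kcbs_C_Suc[OF assms]
  by (simp add: seq_score_snoc)

lemma kcbs_survivors_prefix_closed:
  "x \<in> kcbs_survivors P S T zpre L \<Longrightarrow> take s x \<in> kcbs_survivors P S T zpre L"
proof (induction x rule: rev_induct)
  case Nil
  then show ?case by simp
next
  case (snoc v x)
  then have "(zpre @ x @ [v], seq_score P S zpre (x @ [v])) \<in> C (Suc (length x))"
    using kcbs_L_subset_C unfolding kcbs_survivors_def by auto
  then have "x \<in> kcbs_survivors P S T zpre L"
    using snoc.prems kcbs_C_Suc_iff unfolding kcbs_survivors_def by auto
  then show ?case
    using snoc by (cases "s \<le> length x") auto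
qed

lemma kcbs_survivors_nodes:
  "x \<in> kcbs_survivors P S T zpre L \<Longrightarrow> is_node S zpre x \<and> length x < T"
  using kcbs_L_scored_nodes append_in_scored_nodes_iff unfolding kcbs_survivors_def by blast

lemma kcbs_C_iff:
  assumes "0 < t" "t \<le> T"
  shows "(zpre @ u, l) \<in> C t \<longleftrightarrow> l = seq_score P S zpre u \<and> length u = t \<and>
    (\<exists>x v. u = x @ [v] \<and> x \<in> kcbs_survivors P S T zpre L \<and> v \<in> S (zpre @ x))"
proof
  assume u: "(zpre @ u, l) \<in> C t"
  then have l: "l = seq_score P S zpre u" and "length u = t"
    using kcbs_C_scored_nodes assms append_in_scored_nodes_iff by blast+
  moreover obtain x v where "u = x @ [v]"
    using \<open>length u = t\<close> assms by (cases u rule: rev_cases) auto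
  moreover have "x \<in> kcbs_survivors P S T zpre L \<and> v \<in> S (zpre @ x)"
    using u kcbs_C_Suc_iff[of "length x" x v] \<open>length u = t\<close> assms
    unfolding l \<open>u = x @ [v]\<close> kcbs_survivors_def by auto
  ultimately show "l = seq_score P S zpre u \<and> length u = t \<and>
    (\<exists>x v. u = x @ [v] \<and> x \<in> kcbs_survivors P S T zpre L \<and> v \<in> S (zpre @ x))"
    by blast
next
  assume "l = seq_score P S zpre u \<and> length u = t \<and>
    (\<exists>x v. u = x @ [v] \<and> x \<in> kcbs_survivors P S T zpre L \<and> v \<in> S (zpre @ x))"
  then show "(zpre @ u, l) \<in> C t"
    using kcbs_C_Suc_iff unfolding kcbs_survivors_def by auto
qed

lemma frontier_kcbs_boundary:
  assumes "0 < T"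
  shows "frontier S zpre T (tree_boundary S zpre (kcbs_survivors P S T zpre L))"
proof (rule frontier_tree_boundary[OF _ kcbs_survivors_nodes kcbs_survivors_prefix_closed])
  show "[] \<in> kcbs_survivors P S T zpre L"
    using run assms unfolding kcbs_survivors_def kcbs_run_def by simp
qed

lemma kcbs_final_eq_boundary:
  assumes "0 < T"
  shows "{x. \<exists>l. (zpre @ x, l) \<in> C T} =
    {x \<in> tree_boundary S zpre (kcbs_survivors P S T zpre L). length x = T}"
  using kcbs_C_iff[OF assms order.refl]
  unfolding tree_boundary_def kcbs_survivors_def by auto

lemma kcbs_pruned_eq_boundary:
  "{u. \<exists>t\<in>{1..<T}. \<exists>l. (zpre @ u, l) \<in> C t \<and> (zpre @ u, l) \<notin> L t} =
    {x \<in> tree_boundary S zpre (kcbs_survivors P S T zpre L). length x < T}"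
  using kcbs_C_iff unfolding tree_boundary_def kcbs_survivors_def by auto

end

theorem lemma5:
  fixes P :: "'v::finite list \<Rightarrow> 'v \<Rightarrow> real"
    and S :: "'v list \<Rightarrow> 'v set"
    and EOS :: 'v
    and k B T :: nat
    and zpre :: "'v list"
    and L C :: "nat \<Rightarrow> ('v list \<times> real) set"
  assumes lm: "valid_lm P"
    and k: "1 \<le> k" "k \<le> card (UNIV :: 'v set)"
    and S: "topk_sets k P S"
    and T: "1 \<le> T"
    and run: "kcbs_run P S EOS B T zpre L C"
  shows "(\<forall>A. frontier S zpre T A \<longrightarrow> (\<Sum>w\<in>A. seq_prob P S zpre w) = 1)
       \<and> (let F = {x. \<exists>l. (zpre @ x, l) \<in> C T};
              R = {u. \<exists>t\<in>{1..<T}. \<exists>l. (zpre @ u, l) \<in> C t \<and> (zpre @ u, l) \<notin> L t}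
          in frontier S zpre T (F \<union> R) \<and>
             (\<Sum>x\<in>F. seq_prob P S zpre x) + (\<Sum>u\<in>R. seq_prob P S zpre u) = 1)"
proof -
  have "S h \<noteq> {}" for h
    using S k(1) unfolding topk_sets_def by force
  then have "(\<Sum>v\<in>UNIV. topk_prob P S h v) = 1" for h
    by (rule sum_topk_prob_eq_1[OF lm])
  then have frontier_sum: "frontier S zpre T A \<Longrightarrow> (\<Sum>w\<in>A. seq_prob P S zpre w) = 1" for A
    by (rule frontier_sum_seq_prob)
  define A where "A = tree_boundary S zpre (kcbs_survivors P S T zpre L)"
  have A: "frontier S zpre T A"
    unfolding A_def using T by (intro frontier_kcbs_boundary[OF run]) simp
  have "{x. \<exists>l. (zpre @ x, l) \<in> C T} = {x \<in> A. length x = T}"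
    using kcbs_final_eq_boundary[OF run] T unfolding A_def by simp
  moreover have "{u. \<exists>t\<in>{1..<T}. \<exists>l. (zpre @ u, l) \<in> C t \<and> (zpre @ u, l) \<notin> L t}
      = {x \<in> A. length x < T}"
    unfolding A_def by (rule kcbs_pruned_eq_boundary[OF run])
  ultimately show ?thesis
    using frontier_sum A frontier_split_length[OF A] sum_frontier_split_length[OF A, of "seq_prob P S zpre"]
    unfolding Let_def by simp
qed

end
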